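(* If a polynomial $f \in \mathbb{N}_0[x^{\pm 1}]$ is hyper-monolithic, then $f$ is monolithic.
   Context: $\mathbb{N}_0[x^{\pm 1}]$ denotes the semiring of Laurent polynomials in $x$ with nonnegative integer coefficients; $\operatorname{supp}(f)$ is the set of exponents occurring in $f$ with nonzero coefficient. A nonzero $f$ is monolithic if whenever $f = gh$ with $g,h \in \mathbb{N}_0[x^{\pm 1}]$, one of $g, h$ is a monomial $c x^k$ ($c$ a positive integer, $k\in\mathbb{Z}$). Writing $f = \sum_{i=0}^{n} c_i x^{k_i}$ with $c_i$ positive integers and $k_0 > \cdots > k_n$, $f$ is hyper-monolithic if $|\operatorname{supp}(f)| > 1$ and either $k_0 - k_1 < k_i - k_{i+1}$ for every $i \in \{1,\ldots,n-1\}$, or $k_{n-1} - k_n < k_j - k_{j+1}$ for every $j \in \{0,\ldots,n-2\}$. *)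

theory Defs
  imports Main "HOL-Library.Poly_Mapping"
begin

text \<open>Laurent polynomials in x with nonnegative integer coefficients, N_0[x^{+-1}],
  are modelled as finitely supported maps from exponents (int) to coefficients (nat),
  i.e. the type int =>0 nat; its multiplication is the convolution product
  of Poly_Mapping (monoid algebra of the additive group int).\<close>

type_synonym lpoly = "int \<Rightarrow>\<^sub>0 nat"

definition is_monomial :: "lpoly \<Rightarrow> bool" where
  "is_monomial g \<longleftrightarrow> (\<exists>c k. c > 0 \<and> g = Poly_Mapping.single k c)"

definition monolithic :: "lpoly \<Rightarrow> bool" where
  "monolithic f \<longleftrightarrow> f \<noteq> 0 \<and>
     (\<forall>g h. f = g * h \<longrightarrow> is_monomial g \<or> is_monomial h)"

definition exps :: "lpoly \<Rightarrow> int list" where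
  "exps f = rev (sorted_list_of_set (Poly_Mapping.keys f))"

definition hyper_monolithic :: "lpoly \<Rightarrow> bool" where
  "hyper_monolithic f \<longleftrightarrow>
     (let ks = exps f; n = length ks - 1 in
      card (Poly_Mapping.keys f) > 1 \<and>
      ((\<forall>i. 1 \<le> i \<and> i \<le> n - 1 \<longrightarrow> ks!0 - ks!1 < ks!i - ks!(i+1)) \<or>
       (\<forall>j. j + 2 \<le> n \<longrightarrow> ks!(n-1) - ks!n < ks!j - ks!(j+1))))"

end

theory Submission
  imports Defs "HOL-Library.Set_Algebras"
begin

(* Suppose f = g h with neither factor a monomial. Coefficients are nonnegative, so nothing cancels
   and supp f = supp g + supp h, a sum of two sets with at least two elements each. Let a0 > a1 and
   b0 > b1 be the two largest exponents of g and h, say b0 - b1 <= a0 - a1. Then the two largest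
   exponents of f are a0 + b0 and a0 + b1, so the top gap of f is b0 - b1. But with m = min supp g
   the exponents m + b1 < m + b0 of f lie below a0 + b1 and are b0 - b1 apart, so some later gap
   between consecutive exponents of f is at most the top gap. Substituting x^-1 for x turns the
   bottom gap into the top gap. *)

definition largest_two :: "'a::linorder set \<Rightarrow> 'a \<Rightarrow> 'a \<Rightarrow> bool" where
  "largest_two S x y \<longleftrightarrow>
     x \<in> S \<and> y \<in> S \<and> y < x \<and> (\<forall>s\<in>S. s \<le> x) \<and> (\<forall>s\<in>S. s \<noteq> x \<longrightarrow> s \<le> y)"

lemma largest_two_unique:
  assumes "largest_two S x y" "largest_two S x' y'"
  shows "x = x' \<and> y = y'"
  using assms unfolding largest_two_def by (metis order.antisym order.asym)

lemma sorted_desc_largest_two: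
  fixes ks :: "'a::linorder list"
  assumes "sorted_wrt (>) ks" "2 \<le> length ks"
  shows "largest_two (set ks) (ks!0) (ks!1)"
proof -
  have "s \<le> ks!0 \<and> (s \<noteq> ks!0 \<longrightarrow> s \<le> ks!1)" if "s \<in> set ks" for s
  proof -
    from that obtain i where "i < length ks" "s = ks!i" by (auto simp: in_set_conv_nth)
    then show ?thesis
      using sorted_wrt_nth_less[OF assms(1), of 0 i] sorted_wrt_nth_less[OF assms(1), of 1 i]
      by (cases "i = 0"; cases "i = 1") auto
  qed
  moreover have "ks!1 < ks!0" using sorted_wrt_nth_less[OF assms(1), of 0 1] assms(2) by simp
  moreover have "ks!0 \<in> set ks" "ks!1 \<in> set ks" using assms(2) by (auto intro!: nth_mem)
  ultimately show ?thesis by (simp add: largest_two_def)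
qed

lemma finite_largest_two_exists:
  fixes S :: "'a::linorder set"
  assumes "finite S" "2 \<le> card S"
  shows "\<exists>x y. largest_two S x y"
proof -
  let ?ks = "rev (sorted_list_of_set S)"
  have "sorted_wrt (>) ?ks" by (simp add: sorted_wrt_rev)
  moreover have "2 \<le> length ?ks" "set ?ks = S" using assms by simp_all
  ultimately show ?thesis using sorted_desc_largest_two by metis
qed

lemma set_plus_largest_two:
  fixes A B :: "'a::linordered_ab_group_add set"
  assumes A: "largest_two A a0 a1" and B: "largest_two B b0 b1" and le: "b0 - b1 \<le> a0 - a1"
  shows "largest_two (A + B) (a0 + b0) (a0 + b1)"
  unfolding largest_two_def
proof (intro conjI ballI impI)
  show "a0 + b0 \<in> A + B" "a0 + b1 \<in> A + B" "a0 + b1 < a0 + b0"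
    using A B by (auto simp: largest_two_def)
next
  fix s assume "s \<in> A + B"
  then obtain a b where s: "s = a + b" "a \<in> A" "b \<in> B" by (rule set_plus_elim)
  then show "s \<le> a0 + b0" using A B by (auto simp: largest_two_def intro: add_mono)
  assume "s \<noteq> a0 + b0"
  show "s \<le> a0 + b1"
  proof (cases "a = a0")
    case True
    then have "b \<le> b1" using B s \<open>s \<noteq> a0 + b0\<close> by (auto simp: largest_two_def)
    then show ?thesis using s True by simp
  next
    case False
    then have "a \<le> a1" "b \<le> b0" using A B s by (auto simp: largest_two_def)
    moreover have "a1 + b0 \<le> a0 + b1" using le by (simp add: algebra_simps)
    ultimately show ?thesis using s by (metis add_mono order_trans)
  qed
qed

lemma sorted_desc_gap_below:
  fixes ks :: "'a::linordered_ab_group_add list"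
  assumes sorted: "sorted_wrt (>) ks" and "u \<in> set ks" "v \<in> set ks" "u < v" "u < ks!1"
  shows "\<exists>i. 1 \<le> i \<and> i + 1 < length ks \<and> ks!i - ks!(i+1) \<le> v - u"
proof -
  obtain p q where p: "p < length ks" "v = ks!p" and q: "q < length ks" "u = ks!q"
    using assms by (auto simp: in_set_conv_nth)
  have "p < q"
    using sorted_wrt_nth_less[OF sorted, of q p] p q \<open>u < v\<close>
    by (metis linorder_neqE_nat order.asym)
  moreover have "q \<noteq> 1" using q \<open>u < ks!1\<close> by auto
  ultimately have "2 \<le> q" by simp
  have "ks!(q - 1) \<le> v"
    using sorted_wrt_nth_less[OF sorted, of p "q - 1"] p q \<open>p < q\<close>
    by (cases "p = q - 1") (auto intro: less_imp_le)
  then show ?thesis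
    using \<open>2 \<le> q\<close> q by (intro exI[of _ "q - 1"]) auto
qed

lemma set_plus_top_gap_recurs:
  fixes A B :: "'a::linordered_ab_group_add set"
  assumes "finite A" "finite B" "2 \<le> card A" "2 \<le> card B"
    and sorted: "sorted_wrt (>) ks" and ks: "set ks = A + B"
  shows "\<exists>i. 1 \<le> i \<and> i + 1 < length ks \<and> ks!i - ks!(i+1) \<le> ks!0 - ks!1"
proof -
  have gap: ?thesis
    if A: "largest_two A a0 a1" and B: "largest_two B b0 b1" and le: "b0 - b1 \<le> a0 - a1"
      and "finite A" and ks: "set ks = A + B" for A B a0 a1 b0 b1
  proof -
    have top: "largest_two (set ks) (a0 + b0) (a0 + b1)"
      using set_plus_largest_two[OF A B le] ks by simp
    then have "{a0 + b0, a0 + b1} \<subseteq> set ks" "a0 + b1 \<noteq> a0 + b0"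
      by (auto simp: largest_two_def)
    then have "2 \<le> length ks"
      by (metis card_2_iff card_length card_mono List.finite_set le_trans)
    then have ks01: "ks!0 = a0 + b0" "ks!1 = a0 + b1"
      using largest_two_unique[OF sorted_desc_largest_two[OF sorted] top] by simp_all
    define m where "m = Min A"
    have "m \<le> a1" "a1 < a0" "b1 < b0" "b0 \<in> B" "b1 \<in> B" "m \<in> A"
      using A B \<open>finite A\<close> by (auto simp: largest_two_def m_def intro!: Min_in)
    then have "m + b1 \<in> set ks" "m + b0 \<in> set ks" "m + b1 < m + b0" "m + b1 < ks!1"
      using ks ks01 by (auto intro: add_le_less_mono)
    from sorted_desc_gap_below[OF sorted this] show ?thesis
      using ks01 by simp
  qed
  obtain a0 a1 where "largest_two A a0 a1" using assms finite_largest_two_exists by blast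
  moreover obtain b0 b1 where "largest_two B b0 b1" using assms finite_largest_two_exists by blast
  ultimately show ?thesis
    using gap[of A a0 a1 B b0 b1] gap[of B b0 b1 A a0 a1] assms by (force simp: add.commute)
qed

lemma set_plus_bottom_gap_recurs:
  fixes A B :: "'a::linordered_ab_group_add set"
  assumes "finite A" "finite B" "2 \<le> card A" "2 \<le> card B"
    and sorted: "sorted_wrt (>) ks" and ks: "set ks = A + B" and n: "length ks = n + 1"
  shows "\<exists>j. j + 2 \<le> n \<and> ks!j - ks!(j+1) \<le> ks!(n-1) - ks!n"
proof -
  let ?ks' = "rev (map uminus ks)"
  have "sorted_wrt (>) ?ks'"
    using sorted by (simp add: sorted_wrt_rev sorted_wrt_map)
  moreover have "set ?ks' = uminus ` A + uminus ` B"
    using ks by (force simp: set_plus_def)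
  moreover have "card (uminus ` A) = card A" "card (uminus ` B) = card B"
    by (simp_all add: card_image)
  ultimately obtain i where i: "1 \<le> i" "i + 1 < length ?ks'"
    and gap: "?ks'!i - ?ks'!(i+1) \<le> ?ks'!0 - ?ks'!1"
    using set_plus_top_gap_recurs[of "uminus ` A" "uminus ` B" ?ks'] assms by auto
  have reflected: "?ks'!k = - ks!(n - k)" if "k \<le> n" for k
    using that n by (simp add: rev_nth)
  show ?thesis
  proof (intro exI conjI)
    show "n - i - 1 + 2 \<le> n" using i n by simp
    show "ks!(n - i - 1) - ks!(n - i - 1 + 1) \<le> ks!(n-1) - ks!n"
      using gap i n by (simp add: reflected Suc_diff_Suc)
  qed
qed

lemma mult_lookup_le_lookup_mult:
  fixes g h :: lpoly
  shows "Poly_Mapping.lookup g a * Poly_Mapping.lookup h b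
           \<le> Poly_Mapping.lookup (g * h) (a + b)"
proof -
  let ?F = "\<lambda>l. Poly_Mapping.lookup g l * (\<Sum>q. Poly_Mapping.lookup h q when a + b = l + q)"
  have "Poly_Mapping.lookup (g * h) (a + b) = (\<Sum>l\<in>Poly_Mapping.keys g. ?F l)"
    unfolding lookup_mult by (rule Sum_any.expand_superset) (auto simp: in_keys_iff)
  moreover have "?F a = Poly_Mapping.lookup g a * Poly_Mapping.lookup h b"
    by (simp add: when_def)
  moreover have "a \<in> Poly_Mapping.keys g \<Longrightarrow> ?F a \<le> (\<Sum>l\<in>Poly_Mapping.keys g. ?F l)"
    by (rule member_le_sum) auto
  ultimately show ?thesis by (cases "a \<in> Poly_Mapping.keys g") (auto simp: in_keys_iff)
qed

lemma keys_mult_eq_set_plus: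
  fixes g h :: lpoly
  shows "Poly_Mapping.keys (g * h) = Poly_Mapping.keys g + Poly_Mapping.keys h"
proof
  show "Poly_Mapping.keys (g * h) \<subseteq> Poly_Mapping.keys g + Poly_Mapping.keys h"
    using keys_mult by (force simp: set_plus_def)
  show "Poly_Mapping.keys g + Poly_Mapping.keys h \<subseteq> Poly_Mapping.keys (g * h)"
  proof
    fix k assume "k \<in> Poly_Mapping.keys g + Poly_Mapping.keys h"
    then obtain a b where "k = a + b" "a \<in> Poly_Mapping.keys g" "b \<in> Poly_Mapping.keys h"
      by (rule set_plus_elim)
    then have "0 < Poly_Mapping.lookup g a * Poly_Mapping.lookup h b"
      by (simp add: in_keys_iff)
    then have "0 < Poly_Mapping.lookup (g * h) (a + b)"
      using mult_lookup_le_lookup_mult by (rule order.strict_trans2)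
    with \<open>k = a + b\<close> show "k \<in> Poly_Mapping.keys (g * h)"
      by (simp add: in_keys_iff)
  qed
qed

lemma two_le_card_keys:
  fixes g :: lpoly
  assumes "g \<noteq> 0" "\<not> is_monomial g"
  shows "2 \<le> card (Poly_Mapping.keys g)"
proof -
  have "card (Poly_Mapping.keys g) \<noteq> 0" using assms(1) by simp
  moreover have "card (Poly_Mapping.keys g) \<noteq> 1"
  proof
    assume "card (Poly_Mapping.keys g) = 1"
    then obtain k where k: "Poly_Mapping.keys g = {k}" by (rule card_1_singletonE)
    then have "g = Poly_Mapping.single k (Poly_Mapping.lookup g k)"
      by (intro poly_mapping_eqI) (auto simp: lookup_single when_def in_keys_iff)
    moreover have "Poly_Mapping.lookup g k > 0" using k by (auto simp: in_keys_iff)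
    ultimately show False using assms(2) unfolding is_monomial_def by blast
  qed
  ultimately show ?thesis by linarith
qed

theorem lemma2p6:
  fixes f :: lpoly
  assumes "hyper_monolithic f"
  shows "monolithic f"
proof -
  define ks where "ks = exps f"
  define n where "n = length ks - 1"
  have sorted: "sorted_wrt (>) ks" and set_ks: "set ks = Poly_Mapping.keys f"
    and length_ks: "length ks = card (Poly_Mapping.keys f)"
    by (simp_all add: ks_def exps_def sorted_wrt_rev)
  from assms have "f \<noteq> 0" and n: "length ks = n + 1"
    and gaps: "(\<forall>i. 1 \<le> i \<and> i \<le> n - 1 \<longrightarrow> ks!0 - ks!1 < ks!i - ks!(i+1)) \<or>
       (\<forall>j. j + 2 \<le> n \<longrightarrow> ks!(n-1) - ks!n < ks!j - ks!(j+1))"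
    unfolding hyper_monolithic_def Let_def ks_def [symmetric] n_def [symmetric]
    using length_ks n_def by auto
  have "is_monomial g \<or> is_monomial h" if f: "f = g * h" for g h
  proof (rule ccontr)
    assume "\<not> ?thesis"
    then have "2 \<le> card (Poly_Mapping.keys g)" "2 \<le> card (Poly_Mapping.keys h)"
      using two_le_card_keys \<open>f \<noteq> 0\<close> f by auto
    moreover have "set ks = Poly_Mapping.keys g + Poly_Mapping.keys h"
      using set_ks f keys_mult_eq_set_plus by simp
    ultimately obtain i j where
      "1 \<le> i" "i + 1 < length ks" "ks!i - ks!(i+1) \<le> ks!0 - ks!1"
      "j + 2 \<le> n" "ks!j - ks!(j+1) \<le> ks!(n-1) - ks!n"
      using set_plus_top_gap_recurs[OF _ _ _ _ sorted]
        set_plus_bottom_gap_recurs[OF _ _ _ _ sorted _ n]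
      by (metis finite_keys)
    with gaps n show False by fastforce
  qed
  with \<open>f \<noteq> 0\<close> show ?thesis unfolding monolithic_def by blast
qed

end
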